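(* If $q=p^n$ is odd, then $U_{(q-1)/2}(x)+U_{(q-3)/2}(x)\equiv\left(\frac2q\right)(x-1)^{(q-1)/2}\pmod p$ as polynomials.
   Context: Chebyshev polynomials of the second kind $U_k\in\mathbb Z[x]$: $U_0=1$, $U_1=2x$, $U_{k+2}=2xU_{k+1}-U_k$. $\left(\frac2q\right)$ is $1$ if $2$ is a square in ${\mathbb F}_q$ and $-1$ otherwise. *)

theory Defs
  imports "HOL-Computational_Algebra.Polynomial" "HOL-Number_Theory.Cong" "HOL-Library.Cardinality"
begin

fun cheb_U :: "nat \<Rightarrow> int poly" where
  "cheb_U 0 = 1"
| "cheb_U (Suc 0) = [:0, 2:]"
| "cheb_U (Suc (Suc k)) = [:0, 2:] * cheb_U (Suc k) - cheb_U k"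

text \<open>(2/q) computed inside a given finite field F (of order q):
  1 if 2 is a square in F, -1 otherwise.\<close>
definition two_symbol :: "'a::field itself \<Rightarrow> int" where
  "two_symbol _ = (if \<exists>y::'a. y ^ 2 = 2 then 1 else -1)"

end

(*
  Put a = X^2 + 1 and b = 2X. On polynomials of degree at most k, f |-> b^k f(a/b) is the
  Joukowski substitution x = (X + 1/X)/2 with denominators cleared. It sends U_k to
  2^k (X^(2k+2) - 1)/(X^2 - 1), hence U_m + U_(m-1) to 2^m (X + 1)(X^q - 1)/(X^2 - 1) where
  q = 2m + 1, and it sends 2^m (x - 1)^m to 2^m (X - 1)^(2m). In characteristic p with q a power
  of p, X^q - 1 = (X - 1)^q, so both sides of U_m + U_(m-1) = 2^m (x - 1)^m have the same image;
  as deg a > deg b the substitution is injective, so the identity holds over F_q. Finally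
  2^m = (2/q) in F_q by Euler's criterion, obtained by counting: the m nonzero squares are
  all the roots of y^m = 1.
*)

theory Submission
  imports Defs "HOL-Computational_Algebra.Primes"
begin

(* For degree f \<le> k this is b^k f(a/b). *)
definition homog_comp :: "nat \<Rightarrow> 'a::comm_ring_1 poly \<Rightarrow> 'a poly \<Rightarrow> 'a poly \<Rightarrow> 'a poly" where
  "homog_comp k f a b = (\<Sum>i\<le>k. smult (coeff f i) (a ^ i * b ^ (k - i)))"

lemma homog_comp_add:
  "homog_comp k (f + g) a b = homog_comp k f a b + homog_comp k g a b"
  by (simp add: homog_comp_def sum.distrib smult_add_left)

lemma homog_comp_diff:
  "homog_comp k (f - g) a b = homog_comp k f a b - homog_comp k g a b"
  by (simp add: homog_comp_def sum_subtractf smult_diff_left)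

lemma homog_comp_smult:
  "homog_comp k (smult c f) a b = smult c (homog_comp k f a b)"
proof -
  have "smult c (\<Sum>i\<in>A. g i) = (\<Sum>i\<in>A. smult c (g i))" for A and g :: "nat \<Rightarrow> 'a poly"
    using sum_distrib_left[of "[:c:]" g A] by simp
  then show ?thesis by (simp add: homog_comp_def)
qed

lemma homog_comp_0_1 [simp]: "homog_comp 0 1 a b = 1"
  by (simp add: homog_comp_def)

lemma homog_comp_pCons_0:
  "homog_comp (Suc k) (pCons 0 f) a b = a * homog_comp k f a b"
  unfolding homog_comp_def
  by (subst sum.atMost_Suc_shift) (simp add: sum_distrib_left mult_ac)

lemma homog_comp_Suc:
  assumes "degree f \<le> k"
  shows "homog_comp (Suc k) f a b = b * homog_comp k f a b"
proof -
  have "homog_comp (Suc k) f a b = (\<Sum>i\<le>k. smult (coeff f i) (a ^ i * b ^ (Suc k - i)))"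
    unfolding homog_comp_def using assms by (simp add: coeff_eq_0)
  also have "\<dots> = b * homog_comp k f a b"
    unfolding homog_comp_def sum_distrib_left
    by (intro sum.cong refl) (simp add: Suc_diff_le mult_ac)
  finally show ?thesis .
qed

lemma homog_comp_linear_mult:
  assumes "degree f \<le> k"
  shows "homog_comp (Suc k) ([:c, d:] * f) a b = (smult c b + smult d a) * homog_comp k f a b"
proof -
  have "[:c, d:] * f = smult c f + pCons 0 (smult d f)"
    by (simp add: mult_poly_add_left)
  with assms show ?thesis
    by (simp add: homog_comp_add homog_comp_smult homog_comp_pCons_0 homog_comp_Suc algebra_simps)
qed

lemma homog_comp_linear_power:
  "homog_comp k ([:c, d:] ^ k) a b = (smult c b + smult d a) ^ k"
proof (induction k)
  case (Suc k)
  have "degree ([:c, d:] ^ k) \<le> k"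
    using degree_power_le[of "[:c, d:]" k] by (simp add: order_trans)
  then show ?case
    by (simp only: power_Suc homog_comp_linear_mult Suc.IH)
qed simp

lemma homog_comp_eq_0_imp_eq_0:
  fixes f a b :: "'a::idom poly"
  assumes deg_ab: "degree b < degree a" and "b \<noteq> 0" and "degree f \<le> k"
    and "homog_comp k f a b = 0"
  shows "f = 0"
proof (rule ccontr)
  assume "f \<noteq> 0"
  define e where "e = degree f"
  define t where "t i = a ^ i * b ^ (k - i)" for i
  have "a \<noteq> 0" using deg_ab by auto
  have "e \<le> k" using assms(3) by (simp add: e_def)
  have deg_t: "degree (t i) = i * degree a + (k - i) * degree b" for i
    by (simp add: t_def degree_mult_eq degree_power_eq \<open>a \<noteq> 0\<close> \<open>b \<noteq> 0\<close>)
  have deg_t_less: "degree (t i) < degree (t e)" if "i < e" for i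
  proof -
    have "(e - i) * degree b < (e - i) * degree a" using that deg_ab by simp
    moreover have "(k - i) * degree b = (k - e) * degree b + (e - i) * degree b"
      using that \<open>e \<le> k\<close> by (simp flip: add_mult_distrib)
    moreover have "e * degree a = i * degree a + (e - i) * degree a"
      using that by (simp flip: add_mult_distrib)
    ultimately show ?thesis unfolding deg_t by linarith
  qed
  have "coeff (homog_comp k f a b) (degree (t e)) = (\<Sum>i\<le>k. coeff f i * coeff (t i) (degree (t e)))"
    by (simp add: homog_comp_def coeff_sum t_def)
  also have "\<dots> = coeff f e * lead_coeff (t e)"
  proof -
    have "coeff f i * coeff (t i) (degree (t e)) = 0" if "i \<in> {..k} - {e}" for i
    proof (cases "i < e")
      case True
      then show ?thesis using deg_t_less[OF True] by (simp add: coeff_eq_0)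
    next
      case False
      then have "degree f < i" using that by (auto simp: e_def)
      then show ?thesis by (simp add: coeff_eq_0)
    qed
    then have "(\<Sum>i\<in>{..k} - {e}. coeff f i * coeff (t i) (degree (t e))) = 0"
      by (simp add: sum.neutral)
    then show ?thesis
      using \<open>e \<le> k\<close> by (subst sum.remove[of _ e]) auto
  qed
  also have "\<dots> \<noteq> 0"
    using \<open>f \<noteq> 0\<close> \<open>a \<noteq> 0\<close> \<open>b \<noteq> 0\<close> by (simp add: e_def t_def)
  finally show False using assms(4) by simp
qed

lemma homog_comp_inject:
  fixes f g a b :: "'a::idom poly"
  assumes "degree b < degree a" and "b \<noteq> 0" and "degree f \<le> k" and "degree g \<le> k"
    and "homog_comp k f a b = homog_comp k g a b"
  shows "f = g"
proof -
  have "degree (f - g) \<le> k" using assms(3,4) degree_diff_le by blast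
  with assms show ?thesis
    using homog_comp_eq_0_imp_eq_0[of b a "f - g" k] by (simp add: homog_comp_diff)
qed

fun chebyshev_U :: "nat \<Rightarrow> 'a::comm_ring_1 poly" where
  "chebyshev_U 0 = 1"
| "chebyshev_U (Suc 0) = [:0, 2:]"
| "chebyshev_U (Suc (Suc k)) = [:0, 2:] * chebyshev_U (Suc k) - chebyshev_U k"

lemma coeff_chebyshev_U: "coeff (chebyshev_U k) i = of_int (coeff (cheb_U k) i)"
  by (induction k arbitrary: i rule: cheb_U.induct) (auto simp: coeff_pCons split: nat.split)

lemma degree_chebyshev_U: "degree (chebyshev_U k :: 'a::comm_ring_1 poly) \<le> k"
proof (induction k rule: chebyshev_U.induct)
  case (3 k)
  have "degree [:0, 2 :: 'a:] \<le> 1"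
    by (metis One_nat_def degree_pCons_0 degree_pCons_le)
  then have "degree ([:0, 2:] * chebyshev_U (Suc k) :: 'a poly) \<le> Suc (Suc k)"
    using degree_mult_le[of "[:0, 2 :: 'a:]" "chebyshev_U (Suc k)"] 3 by linarith
  with 3 show ?case
    using degree_diff_le by (metis chebyshev_U.simps(3) le_SucI)
qed auto

lemma homog_comp_chebyshev_U:
  fixes X :: "'a::comm_ring_1 poly"
  shows "(X ^ 2 - 1) * homog_comp k (chebyshev_U k) (X ^ 2 + 1) (2 * X)
           = 2 ^ k * (X ^ (2 * k + 2) - 1)"
proof (induction k rule: chebyshev_U.induct)
  case 1
  then show ?case by (simp add: power2_eq_square)
next
  case 2
  have "homog_comp 1 (chebyshev_U 1) (X ^ 2 + 1) (2 * X) = 2 * (X ^ 2 + 1)"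
    using homog_comp_linear_mult[of 1 0 0 2] by (simp add: numeral_poly power2_eq_square)
  then show ?case by (simp add: algebra_simps eval_nat_numeral)
next
  case (3 k)
  define H where "H j = homog_comp j (chebyshev_U j) (X ^ 2 + 1) (2 * X)" for j
  have deg: "degree (chebyshev_U k :: 'a poly) \<le> Suc k"
    by (rule le_SucI[OF degree_chebyshev_U])
  have rec: "H (Suc (Suc k)) = 2 * (X ^ 2 + 1) * H (Suc k) - (2 * X) * ((2 * X) * H k)"
    unfolding H_def chebyshev_U.simps homog_comp_diff
    by (simp add: homog_comp_pCons_0 homog_comp_smult homog_comp_Suc deg degree_chebyshev_U numeral_poly)
  have "(X ^ 2 - 1) * H (Suc (Suc k))
      = 2 * (X ^ 2 + 1) * ((X ^ 2 - 1) * H (Suc k)) - (2 * X) * (2 * X) * ((X ^ 2 - 1) * H k)"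
    unfolding rec by (simp add: algebra_simps)
  also have "\<dots> = 2 * (X ^ 2 + 1) * (2 ^ Suc k * (X ^ (2 * Suc k + 2) - 1))
      - (2 * X) * (2 * X) * (2 ^ k * (X ^ (2 * k + 2) - 1))"
    using 3 by (simp add: H_def)
  also have "\<dots> = 2 ^ Suc (Suc k) * (X ^ (2 * Suc (Suc k) + 2) - 1)"
    by (simp add: algebra_simps power_add power2_eq_square)
  finally show ?case by (simp add: H_def)
qed

lemma homog_comp_chebyshev_U_add_prev:
  fixes X :: "'a::comm_ring_1 poly"
  assumes "0 < m"
  shows "(X ^ 2 - 1) * homog_comp m (chebyshev_U m + chebyshev_U (m - 1)) (X ^ 2 + 1) (2 * X)
           = 2 ^ m * (X + 1) * (X ^ (2 * m + 1) - 1)"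
proof -
  obtain j where m: "m = Suc j" using assms gr0_implies_Suc by blast
  define H where "H i = homog_comp i (chebyshev_U i) (X ^ 2 + 1) (2 * X)" for i
  have "(X ^ 2 - 1) * homog_comp m (chebyshev_U m + chebyshev_U (m - 1)) (X ^ 2 + 1) (2 * X)
      = (X ^ 2 - 1) * H (Suc j) + 2 * X * ((X ^ 2 - 1) * H j)"
    by (simp add: m H_def homog_comp_add homog_comp_Suc degree_chebyshev_U algebra_simps)
  also have "\<dots> = 2 ^ Suc j * (X ^ (2 * Suc j + 2) - 1) + 2 * X * (2 ^ j * (X ^ (2 * j + 2) - 1))"
    by (simp only: H_def homog_comp_chebyshev_U)
  also have "\<dots> = 2 ^ m * (X + 1) * (X ^ (2 * m + 1) - 1)"
    by (simp add: m algebra_simps power_add power2_eq_square)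
  finally show ?thesis .
qed

lemma smult_power_two: "smult (2 ^ m) p = 2 ^ m * (p :: 'a::comm_ring_1 poly)"
proof -
  have "smult (2 ^ m) p = [:2:] ^ m * p" by (simp add: poly_const_pow)
  then show ?thesis by (simp add: numeral_poly)
qed

lemma homog_comp_X_minus_1_power:
  fixes X :: "'a::comm_ring_1 poly"
  shows "(X ^ 2 - 1) * homog_comp m (smult (2 ^ m) ([:-1, 1:] ^ m)) (X ^ 2 + 1) (2 * X)
           = 2 ^ m * (X + 1) * (X - 1) ^ (2 * m + 1)"
proof -
  have "homog_comp m ([:-1, 1:] ^ m) (X ^ 2 + 1) (2 * X) = ((X - 1) ^ 2) ^ m"
    using homog_comp_linear_power[where k = m and c = "-1" and d = 1 and a = "X ^ 2 + 1" and b = "2 * X"]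
    by (simp add: power2_eq_square algebra_simps)
  then have "homog_comp m (smult (2 ^ m) ([:-1, 1:] ^ m)) (X ^ 2 + 1) (2 * X) = 2 ^ m * (X - 1) ^ (2 * m)"
    unfolding homog_comp_smult by (simp only: smult_power_two power_mult)
  then show ?thesis
    by (simp add: power2_eq_square algebra_simps)
qed

lemma chebyshev_U_add_prev_eq_power:
  fixes m n :: nat
  assumes "prime CHAR('a::field)" and "(2::'a) \<noteq> 0" and "2 * m + 1 = CHAR('a) ^ n" and "0 < m"
  shows "chebyshev_U m + chebyshev_U (m - 1) = smult (2 ^ m) ([:-1, 1:] ^ m :: 'a poly)"
    (is "?W = ?L")
proof -
  define X :: "'a poly" where "X = [:0, 1:]"
  have "(X + (-1)) ^ (2 * m + 1) = X ^ (2 * m + 1) + (-1) ^ (2 * m + 1)"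
    by (rule freshmans_dream') (use assms(1,3) in simp_all)
  then have "(X - 1) ^ (2 * m + 1) = X ^ (2 * m + 1) - 1"
    by simp
  then have "(X ^ 2 - 1) * homog_comp m ?L (X ^ 2 + 1) (2 * X)
      = (X ^ 2 - 1) * homog_comp m ?W (X ^ 2 + 1) (2 * X)"
    by (simp only: homog_comp_X_minus_1_power homog_comp_chebyshev_U_add_prev[OF assms(4)])
  moreover have "X ^ 2 - 1 \<noteq> 0"
  proof
    assume "X ^ 2 - 1 = 0"
    then have "poly (X ^ 2 - 1) 0 = 0" by simp
    then show False by (simp add: X_def)
  qed
  ultimately have "homog_comp m ?W (X ^ 2 + 1) (2 * X) = homog_comp m ?L (X ^ 2 + 1) (2 * X)"
    by simp
  moreover have "degree (2 * X) < degree (X ^ 2 + 1)" and "2 * X \<noteq> 0"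
    using assms(2) by (simp_all add: X_def numeral_poly degree_add_eq_left degree_power_eq)
  moreover have "degree ?W \<le> m"
    using degree_chebyshev_U[of m] degree_chebyshev_U[of "m - 1"] degree_add_le
    by (metis diff_le_self le_trans)
  moreover have "degree ?L \<le> m"
    using degree_power_le[of "[:-1, 1 :: 'a:]" m] by simp
  ultimately show ?thesis
    by (rule homog_comp_inject[rotated -1])
qed

lemma CHAR_dvd_card_UNIV: "CHAR('a::{ring_1,finite}) dvd CARD('a)"
proof -
  have "(\<Sum>y\<in>UNIV. y + 1) = (\<Sum>y\<in>UNIV. y :: 'a)"
    by (rule sum.reindex_bij_witness[of _ "\<lambda>y. y - 1" "\<lambda>y. y + 1"]) auto
  then have "of_nat CARD('a) = (0 :: 'a)"
    by (simp add: sum.distrib)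
  then show ?thesis
    by (simp only: of_nat_eq_0_iff_char_dvd)
qed

lemma prime_CHAR_finite_field: "prime CHAR('a::{field,finite})"
  by (simp add: prime_CHAR_semidom finite_imp_CHAR_pos)

lemma CHAR_eq_if_card_eq_prime_power:
  assumes "prime p" and "CARD('a::{field,finite}) = p ^ n"
  shows "CHAR('a) = p"
  using prime_CHAR_finite_field CHAR_dvd_card_UNIV[where 'a = 'a] assms prime_dvd_power primes_dvd_imp_eq
  by metis

lemma two_neq_zero_if_odd_card:
  assumes "odd CARD('a::{field,finite})"
  shows "(2::'a) \<noteq> 0"
proof
  assume "(2::'a) = 0"
  then have "CHAR('a) dvd 2"
    using of_nat_eq_0_iff_char_dvd[of 2, where 'a = 'a] by simp
  then have "CHAR('a) = 2"
    using primes_dvd_imp_eq prime_CHAR_finite_field two_is_prime_nat by blast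
  then show False
    using CHAR_dvd_card_UNIV[where 'a = 'a] assms by simp
qed

lemma finite_field_power_card_minus_1:
  fixes x :: "'a::{field,finite}"
  assumes "x \<noteq> 0"
  shows "x ^ (CARD('a) - 1) = 1"
proof -
  have "(\<Prod>y\<in>UNIV - {0}. x * y) = (\<Prod>y\<in>UNIV - {0}. y)"
    by (rule prod.reindex_bij_witness[of _ "\<lambda>y. y / x" "\<lambda>y. x * y"]) (use assms in auto)
  moreover have "(\<Prod>y\<in>UNIV - {0}. x * y) = x ^ (CARD('a) - 1) * (\<Prod>y\<in>UNIV - {0}. y)"
    by (simp add: prod.distrib card_Diff_singleton)
  moreover have "(\<Prod>y\<in>UNIV - {0::'a}. y) \<noteq> 0" by simp
  ultimately show ?thesis by simp
qed

lemma card_nonzero_squares_ge: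
  assumes "CARD('a::{field,finite}) = 2 * m + 1"
  shows "m \<le> card ((\<lambda>y. y ^ 2) ` (UNIV - {0 :: 'a}))" (is "_ \<le> card ?S")
proof -
  define roots where "roots s = {y. poly [:-s, 0, 1:] y = (0 :: 'a)}" for s
  have card_roots: "card (roots s) \<le> 2" for s
    using card_poly_roots_bound[of "[:-s, 0, 1:]"] by (simp add: roots_def)
  have "UNIV - {0} \<subseteq> (\<Union>s\<in>?S. roots s)"
    by (auto simp: roots_def power2_eq_square)
  then have "card (UNIV - {0 :: 'a}) \<le> card (\<Union>s\<in>?S. roots s)"
    by (intro card_mono) auto
  also have "\<dots> \<le> (\<Sum>s\<in>?S. card (roots s))"
    by (rule card_UN_le) simp
  also have "\<dots> \<le> card ?S * 2"
    using sum_bounded_above[of ?S "\<lambda>s. card (roots s)" 2] card_roots by simp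
  finally show ?thesis
    using assms by (simp add: card_Diff_singleton)
qed

lemma square_if_power_half_card_eq_1:
  fixes c :: "'a::{field,finite}"
  assumes card: "CARD('a) = 2 * m + 1" and "c ^ m = 1"
  shows "\<exists>y. y ^ 2 = c"
proof -
  define P :: "'a poly" where "P = monom 1 m - 1"
  define S where "S = (\<lambda>y. y ^ 2) ` (UNIV - {0 :: 'a})"
  define R where "R = {x. poly P x = 0}"
  have poly_P: "poly P x = x ^ m - 1" for x
    by (simp add: P_def poly_monom)
  have "card {0 :: 'a, 1} \<le> CARD('a)"
    by (rule card_mono) simp_all
  then have "0 < m" using card by simp
  then have "coeff P m = 1"
    by (simp add: P_def coeff_monom)
  then have "P \<noteq> 0" by auto
  moreover have "degree P \<le> m"
    using degree_diff_le[of "monom 1 m" m 1] by (simp add: P_def degree_monom_eq)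
  ultimately have "card R \<le> m"
    using card_poly_roots_bound[of P] unfolding R_def by linarith
  also have "m \<le> card S"
    using card_nonzero_squares_ge[OF card] by (simp add: S_def)
  finally have "card R \<le> card S" .
  moreover have "S \<subseteq> R"
  proof
    fix s assume "s \<in> S"
    then obtain y where "y \<noteq> 0" and "s = y ^ 2" by (auto simp: S_def)
    moreover have "y ^ (2 * m) = 1"
      using finite_field_power_card_minus_1[OF \<open>y \<noteq> 0\<close>] card by simp
    ultimately show "s \<in> R" by (simp add: R_def poly_P flip: power_mult)
  qed
  ultimately have "S = R"
    using card_mono[of R S] by (intro card_subset_eq) auto
  moreover have "c \<in> R" using assms(2) by (simp add: R_def poly_P)
  ultimately show ?thesis by (auto simp: S_def)
qed

lemma two_power_half_card_eq_two_symbol: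
  assumes card: "CARD('a::{field,finite}) = 2 * m + 1"
  shows "(2::'a) ^ m = of_int (two_symbol TYPE('a))"
proof -
  have two: "(2::'a) \<noteq> 0"
    using card by (intro two_neq_zero_if_odd_card) simp
  show ?thesis
  proof (cases "\<exists>y::'a. y ^ 2 = 2")
    case True
    then obtain y :: 'a where y: "y ^ 2 = 2" by blast
    with two have "y \<noteq> 0" by auto
    then have "(y ^ 2) ^ m = 1"
      using finite_field_power_card_minus_1[OF \<open>y \<noteq> 0\<close>] card by (simp flip: power_mult)
    with True y show ?thesis by (simp add: two_symbol_def)
  next
    case False
    have "((2::'a) ^ m) ^ 2 = 1"
      using finite_field_power_card_minus_1[OF two] card by (simp flip: power_mult add: mult.commute)
    then have "(2::'a) ^ m = 1 \<or> (2::'a) ^ m = -1" by (simp add: power2_eq_1_iff)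
    moreover have "(2::'a) ^ m \<noteq> 1"
      using square_if_power_half_card_eq_1[OF card] False by blast
    ultimately show ?thesis using False by (simp add: two_symbol_def)
  qed
qed

lemma chebyshev_U_add_prev_eq_two_symbol:
  assumes "prime p" and "CARD('a::{field,finite}) = p ^ n" and "CARD('a) = 2 * m + 1" and "0 < m"
  shows "chebyshev_U m + chebyshev_U (m - 1)
           = smult (of_int (two_symbol TYPE('a))) ([:-1, 1:] ^ m :: 'a poly)"
proof -
  have "CHAR('a) = p"
    using CHAR_eq_if_card_eq_prime_power assms(1,2) by blast
  moreover have "(2::'a) \<noteq> 0"
    using assms(3) by (intro two_neq_zero_if_odd_card) simp
  ultimately have "chebyshev_U m + chebyshev_U (m - 1) = smult (2 ^ m) ([:-1, 1:] ^ m :: 'a poly)"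
    using assms by (intro chebyshev_U_add_prev_eq_power[where n = n]) simp_all
  then show ?thesis
    by (simp only: two_power_half_card_eq_two_symbol[OF assms(3)])
qed

lemma coeff_X_minus_1_power:
  "coeff ([:-1, 1:] ^ m :: 'a::comm_ring_1 poly) i = of_int (coeff ([:-1, 1:] ^ m) i)"
  by (induction m arbitrary: i) (auto simp: coeff_pCons split: nat.split)

theorem proposition9p4:
  fixes p n q :: nat
  assumes "prime p" and "n \<ge> 1" and "q = p ^ n" and "odd q"
    and "CARD('a) = q"
  shows "\<forall>i. [coeff (cheb_U ((q - 1) div 2) + cheb_U ((q - 3) div 2)) i
               = two_symbol TYPE('a::{field,finite}) * coeff ([:-1, 1:] ^ ((q - 1) div 2)) i] (mod int p)"
proof
  fix i
  define m where "m = (q - 1) div 2"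
  have q: "q = 2 * m + 1" and "(q - 3) div 2 = m - 1"
    using assms(4) by (simp_all add: m_def)
  have "2 \<le> p" using prime_ge_2_nat[OF assms(1)] .
  moreover have "p \<le> q" using assms(2,3) \<open>2 \<le> p\<close> by (simp add: self_le_power)
  ultimately have "0 < m" using q by linarith
  have card: "CARD('a) = p ^ n" "CARD('a) = 2 * m + 1"
    using assms(3,5) q by simp_all
  from chebyshev_U_add_prev_eq_two_symbol[OF assms(1) card \<open>0 < m\<close>]
  have "coeff (chebyshev_U m + chebyshev_U (m - 1) :: 'a poly) i
      = of_int (two_symbol TYPE('a)) * coeff ([:-1, 1:] ^ m :: 'a poly) i"
    by (simp only: coeff_smult)
  then have "(of_int (coeff (cheb_U m + cheb_U (m - 1)) i) :: 'a)
      = of_int (two_symbol TYPE('a) * coeff ([:-1, 1:] ^ m) i)"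
    by (simp only: coeff_add coeff_chebyshev_U coeff_X_minus_1_power[where 'a = 'a] of_int_add of_int_mult)
  then have "[coeff (cheb_U m + cheb_U (m - 1)) i
      = two_symbol TYPE('a) * coeff ([:-1, 1:] ^ m) i] (mod int p)"
    by (simp only: of_int_eq_iff_cong_CHAR CHAR_eq_if_card_eq_prime_power[OF assms(1) card(1)])
  then show "[coeff (cheb_U ((q - 1) div 2) + cheb_U ((q - 3) div 2)) i
      = two_symbol TYPE('a) * coeff ([:-1, 1:] ^ ((q - 1) div 2)) i] (mod int p)"
    unfolding m_def[symmetric] \<open>(q - 3) div 2 = m - 1\<close> .
qed

end
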